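(* Let $G$ be a checkerboard-colored graph cellularly embedded on the torus, with faces colored red and blue. Let $k_r$ and $k_b$ be the total number of red faces and of blue faces respectively. Suppose each vertex of $G$ is incident to an odd number of red faces and an odd number of blue faces. If $G$ contains an A-trail, then $k_r$ is odd or $k_b$ is odd.
   Context: A checkerboard coloring of an embedded graph is a proper 2-coloring (red/blue) of its faces, i.e. faces sharing an edge receive different colors. A transition at a vertex is a partition of its half-edges into pairs; it is smooth if it only pairs half-edges adjacent in the cyclic rotation at the vertex. An A-trail is an Eulerian circuit all of whose induced transitions (pairing consecutively traversed half-edges) are smooth. *)

theory Defs
  imports Main
begin

text \<open>Cellularly embedded graphs on orientable surfaces are represented combinatorially
by rotation systems (combinatorial maps): a finite set D of darts (half-edges),
a fixed-point-free involution alpha pairing the two half-edges of each edge, and a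
permutation sigma of D giving the cyclic rotation of half-edges around each vertex.
Vertices are the sigma-orbits, edges the alpha-orbits, faces the orbits of sigma o alpha
(Heffter--Edmonds).  The surface is the torus iff the map is connected and
V - E + F = 0.\<close>

definition orb :: "('a \<Rightarrow> 'a) \<Rightarrow> 'a \<Rightarrow> 'a set" where
  "orb f x = {(f ^^ n) x | n. True}"

definition vertex_of :: "('a \<Rightarrow> 'a) \<Rightarrow> 'a \<Rightarrow> 'a set" where
  "vertex_of \<sigma> d = orb \<sigma> d"

definition face_of :: "('a \<Rightarrow> 'a) \<Rightarrow> ('a \<Rightarrow> 'a) \<Rightarrow> 'a \<Rightarrow> 'a set" where
  "face_of \<alpha> \<sigma> d = orb (\<sigma> \<circ> \<alpha>) d"

definition edge_of :: "('a \<Rightarrow> 'a) \<Rightarrow> 'a \<Rightarrow> 'a set" where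
  "edge_of \<alpha> d = {d, \<alpha> d}"

definition vertices :: "'a set \<Rightarrow> ('a \<Rightarrow> 'a) \<Rightarrow> 'a set set" where
  "vertices D \<sigma> = vertex_of \<sigma> ` D"

definition edges :: "'a set \<Rightarrow> ('a \<Rightarrow> 'a) \<Rightarrow> 'a set set" where
  "edges D \<alpha> = edge_of \<alpha> ` D"

definition faces :: "'a set \<Rightarrow> ('a \<Rightarrow> 'a) \<Rightarrow> ('a \<Rightarrow> 'a) \<Rightarrow> 'a set set" where
  "faces D \<alpha> \<sigma> = face_of \<alpha> \<sigma> ` D"

definition rotation_system :: "'a set \<Rightarrow> ('a \<Rightarrow> 'a) \<Rightarrow> ('a \<Rightarrow> 'a) \<Rightarrow> bool" where
  "rotation_system D \<alpha> \<sigma> \<longleftrightarrow>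
     finite D \<and> D \<noteq> {} \<and>
     (\<forall>d\<in>D. \<alpha> d \<in> D \<and> \<alpha> d \<noteq> d \<and> \<alpha> (\<alpha> d) = d) \<and>
     bij_betw \<sigma> D D \<and>
     (\<forall>x\<in>D. \<forall>y\<in>D. (x, y) \<in> ({(d, \<sigma> d) | d. d \<in> D} \<union> {(d, \<alpha> d) | d. d \<in> D})\<^sup>*)"

definition torus_map :: "'a set \<Rightarrow> ('a \<Rightarrow> 'a) \<Rightarrow> ('a \<Rightarrow> 'a) \<Rightarrow> bool" where
  "torus_map D \<alpha> \<sigma> \<longleftrightarrow> rotation_system D \<alpha> \<sigma> \<and>
     int (card (vertices D \<sigma>)) - int (card (edges D \<alpha>)) + int (card (faces D \<alpha> \<sigma>)) = 0"

text \<open>Checkerboard colouring: red F true = face F is red, false = blue.  The two sides of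
the edge {d, alpha d} are the faces of d and of alpha d.\<close>
definition checkerboard :: "'a set \<Rightarrow> ('a \<Rightarrow> 'a) \<Rightarrow> ('a \<Rightarrow> 'a) \<Rightarrow> ('a set \<Rightarrow> bool) \<Rightarrow> bool" where
  "checkerboard D \<alpha> \<sigma> red \<longleftrightarrow>
     (\<forall>d\<in>D. red (face_of \<alpha> \<sigma> d) \<noteq> red (face_of \<alpha> \<sigma> (\<alpha> d)))"

text \<open>Face corners at a vertex v correspond bijectively to the darts d at v: the corner
between alpha(d') and sigma(alpha d') = d lies in face_of d.  So the number of incidences of
v with red faces, counted with multiplicity (corners), is the number of darts d at v whose
face is red.\<close>
definition red_incidences :: "('a \<Rightarrow> 'a) \<Rightarrow> ('a \<Rightarrow> 'a) \<Rightarrow> ('a set \<Rightarrow> bool) \<Rightarrow> 'a set \<Rightarrow> nat" where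
  "red_incidences \<alpha> \<sigma> red v = card {d \<in> v. red (face_of \<alpha> \<sigma> d)}"

definition blue_incidences :: "('a \<Rightarrow> 'a) \<Rightarrow> ('a \<Rightarrow> 'a) \<Rightarrow> ('a set \<Rightarrow> bool) \<Rightarrow> 'a set \<Rightarrow> nat" where
  "blue_incidences \<alpha> \<sigma> red v = card {d \<in> v. \<not> red (face_of \<alpha> \<sigma> d)}"

text \<open>A closed walk given as a cyclic list of darts ts (dart ts!i is traversed from its
own vertex to the vertex of alpha (ts!i)).  The transition at the passage from ts!i to ts!(i+1) pairs the
half-edges alpha (ts!i) and ts!(i+1); it is smooth iff they are adjacent in the rotation.\<close>
definition eulerian_circuit :: "'a set \<Rightarrow> ('a \<Rightarrow> 'a) \<Rightarrow> ('a \<Rightarrow> 'a) \<Rightarrow> 'a list \<Rightarrow> bool" where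
  "eulerian_circuit D \<alpha> \<sigma> ts \<longleftrightarrow>
     ts \<noteq> [] \<and> set ts \<subseteq> D \<and>
     distinct (map (edge_of \<alpha>) ts) \<and> set (map (edge_of \<alpha>) ts) = edges D \<alpha> \<and>
     (\<forall>i < length ts. ts ! ((i + 1) mod length ts) \<in> vertex_of \<sigma> (\<alpha> (ts ! i)))"

definition smooth_pair :: "('a \<Rightarrow> 'a) \<Rightarrow> 'a \<Rightarrow> 'a \<Rightarrow> bool" where
  "smooth_pair \<sigma> a b \<longleftrightarrow> \<sigma> a = b \<or> \<sigma> b = a"

definition A_trail :: "'a set \<Rightarrow> ('a \<Rightarrow> 'a) \<Rightarrow> ('a \<Rightarrow> 'a) \<Rightarrow> 'a list \<Rightarrow> bool" where
  "A_trail D \<alpha> \<sigma> ts \<longleftrightarrow> eulerian_circuit D \<alpha> \<sigma> ts \<and>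
     (\<forall>i < length ts. smooth_pair \<sigma> (\<alpha> (ts ! i)) (ts ! ((i + 1) mod length ts)))"

end

theory Submission
  imports Defs "HOL-Combinatorics.Cycles" "HOL-Combinatorics.Orbits"
begin

(*
  Let phi = sigma o alpha be the face permutation.  By the checkerboard condition the colour of
  the face of a dart (its corner) alternates around every vertex, so phi preserves the set R of
  red darts, its cycles on R are the red faces, and the red darts at a vertex form one
  sigma^2-orbit, of odd size by hypothesis.  Every edge has exactly one red dart, and a smooth
  transition never changes the colour of the traversed dart; so an A-trail lists R, directly
  or through alpha, in a cyclic order c with phi (c x) in {x, sigma^2 x}.  Then phi o c moves
  points only along odd orbits and is even, so phi on R has the sign of the |R|-cycle c:
  |R| - k_r and |R| - 1 have the same parity, and k_r is odd.
*)

section \<open>Sign of a permutation and its orbits\<close>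

lemma swapidseq_cycle_of_list:
  "distinct cs \<Longrightarrow> swapidseq (length cs - 1) (cycle_of_list cs)"
proof (induction cs rule: cycle_of_list.induct)
  case (1 i j cs)
  then have "swapidseq (length (j # cs) - 1) (cycle_of_list (j # cs))" by simp
  then have "swapidseq (Suc (length (j # cs) - 1)) (transpose i j \<circ> cycle_of_list (j # cs))"
    using "1.prems" by (intro swapidseq.comp_Suc) auto
  then show ?case by (simp add: comp_def)
qed (simp_all add: id_def)

lemma evenperm_cycle_of_list:
  "distinct cs \<Longrightarrow> evenperm (cycle_of_list cs) \<longleftrightarrow> even (length cs - 1)"
  using evenperm_unique[OF swapidseq_cycle_of_list refl] .

lemma set_support_eq_orbit:
  "permutation f \<Longrightarrow> set (support f s) = orbit f s"
  unfolding support_set orbit_altdef_permutation by auto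

lemma perm_restrict_orbit_eq_cycle_of_list:
  assumes "permutation f"
  shows "perm_restrict f (orbit f s) = cycle_of_list (support f s)"
proof
  fix x
  show "perm_restrict f (orbit f s) x = cycle_of_list (support f s) x"
    using cycle_restrict[OF assms, of x s] id_outside_supp[of x "support f s"]
    by (metis perm_restrict_simps set_support_eq_orbit[OF assms])
qed

lemma evenperm_perm_restrict_orbit:
  assumes "permutation f"
  shows "evenperm (perm_restrict f (orbit f s)) \<longleftrightarrow> odd (card (orbit f s))"
proof -
  have distinct: "distinct (support f s)"
    using cycle_of_permutation[OF assms] .
  have "card (orbit f s) = length (support f s)"
    using distinct_card[OF distinct] set_support_eq_orbit[OF assms] by simp
  moreover have "support f s \<noteq> []"
    using set_support_eq_orbit[OF assms] orbit_nonempty by (metis set_empty)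
  ultimately show ?thesis
    unfolding perm_restrict_orbit_eq_cycle_of_list[OF assms] evenperm_cycle_of_list[OF distinct]
    by (cases "length (support f s)") simp_all
qed

lemma orbits_eq_insert_orbit:
  assumes "f permutes S" "finite S" "s \<in> S"
  defines "A \<equiv> orbit f s"
  shows "orbit f ` S = insert A (orbit (perm_restrict f (S - A)) ` (S - A))"
    and "A \<notin> orbit (perm_restrict f (S - A)) ` (S - A)"
proof -
  have perm: "permutation f"
    using assms(1,2) permutation_permutes by blast
  have cyclic: "cyclic_on f A"
    unfolding A_def using assms(1,2) by (rule cyclic_on_orbit)
  have restrict: "perm_restrict f (S - A) permutes (S - A)"
    using assms(1) cyclic by (rule perm_restrict_diff_cyclic)
  have "perm_restrict f (S - A) \<in> S - A \<rightarrow> S - A"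
    using permutes_in_image[OF restrict] by (intro funcsetI) blast
  then have orbit_restrict: "orbit (perm_restrict f (S - A)) x = orbit f x" if "x \<in> S - A" for x
    by (rule orbit_cong0[OF that]) (simp add: perm_restrict_simps)
  have "s \<in> A"
    unfolding A_def using perm by (rule permutation_self_in_orbit)
  then have "orbit f ` A = {A}"
    using orbit_cyclic_eq3[OF cyclic] by blast
  moreover have "S = A \<union> (S - A)"
    using permutes_orbit_subset[OF assms(1,3)] by (auto simp: A_def)
  then have "orbit f ` S = orbit f ` A \<union> orbit f ` (S - A)"
    by (metis image_Un)
  moreover have "orbit f ` (S - A) = orbit (perm_restrict f (S - A)) ` (S - A)"
    using orbit_restrict by simp
  ultimately show "orbit f ` S = insert A (orbit (perm_restrict f (S - A)) ` (S - A))"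
    by simp
  show "A \<notin> orbit (perm_restrict f (S - A)) ` (S - A)"
  proof
    assume "A \<in> orbit (perm_restrict f (S - A)) ` (S - A)"
    then obtain x where "x \<in> S - A" "A = orbit f x"
      using orbit_restrict by auto
    then show False
      using permutation_self_in_orbit[OF perm, of x] by simp
  qed
qed

lemma evenperm_split_orbit:
  assumes "f permutes S" "finite S" "s \<in> S"
  defines "A \<equiv> orbit f s"
  shows "evenperm f \<longleftrightarrow> (evenperm (perm_restrict f (S - A)) \<longleftrightarrow> odd (card A))"
proof -
  define g where "g = perm_restrict f (S - A)"
  have perm: "permutation f"
    using assms(1,2) permutation_permutes by blast
  have "A \<subseteq> S" "cyclic_on f A"
    unfolding A_def using permutes_orbit_subset[OF assms(1,3)] cyclic_on_orbit[OF assms(1,2)] .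
  have "g \<circ> perm_restrict f A = perm_restrict f ((S - A) \<union> A)"
    unfolding g_def using \<open>cyclic_on f A\<close> by (intro perm_restrict_comp) auto
  then have f_eq: "f = g \<circ> perm_restrict f A"
    using \<open>A \<subseteq> S\<close> assms(1) by (simp add: Un_absorb2)
  have "g permutes S - A"
    unfolding g_def using assms(1) \<open>cyclic_on f A\<close> by (rule perm_restrict_diff_cyclic)
  then have "permutation g"
    using assms(2) by (meson finite_Diff permutation_permutes)
  moreover have "permutation (perm_restrict f A)"
    unfolding A_def perm_restrict_orbit_eq_cycle_of_list[OF perm] by (rule permutation_of_cycle)
  ultimately have "evenperm (g \<circ> perm_restrict f A) \<longleftrightarrow> (evenperm g \<longleftrightarrow> odd (card A))"
    using evenperm_perm_restrict_orbit[OF perm] by (simp add: evenperm_comp A_def)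
  then show ?thesis
    unfolding g_def[symmetric] by (simp only: f_eq[symmetric])
qed

theorem evenperm_iff_even_card_plus_card_orbits:
  assumes "f permutes S" "finite S"
  shows "evenperm f \<longleftrightarrow> even (card S + card (orbit f ` S))"
  using assms(2,1)
proof (induction S arbitrary: f rule: finite_psubset_induct)
  case (psubset S)
  show ?case
  proof (cases "S = {}")
    case True
    then show ?thesis
      using psubset.prems by (simp add: permutes_empty)
  next
    case False
    then obtain s where "s \<in> S" by auto
    define A where "A = orbit f s"
    define g where "g = perm_restrict f (S - A)"
    have "permutation f"
      using psubset permutation_permutes by blast
    then have "s \<in> A"
      unfolding A_def by (rule permutation_self_in_orbit)
    have "A \<subseteq> S" "cyclic_on f A"
      unfolding A_def
      using permutes_orbit_subset[OF psubset.prems \<open>s \<in> S\<close>]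
        cyclic_on_orbit[OF psubset.prems psubset.hyps(1)] .
    have "g permutes S - A"
      unfolding g_def using psubset.prems \<open>cyclic_on f A\<close> by (rule perm_restrict_diff_cyclic)
    then have ev_g: "evenperm g \<longleftrightarrow> even (card (S - A) + card (orbit g ` (S - A)))"
      using psubset.IH \<open>s \<in> A\<close> \<open>s \<in> S\<close> by blast
    have ev_f: "evenperm f \<longleftrightarrow> (evenperm g \<longleftrightarrow> odd (card A))"
      using evenperm_split_orbit[OF psubset.prems psubset.hyps(1) \<open>s \<in> S\<close>]
      by (simp add: A_def g_def)
    have card_orbits: "card (orbit f ` S) = Suc (card (orbit g ` (S - A)))"
      using orbits_eq_insert_orbit[OF psubset.prems psubset.hyps(1) \<open>s \<in> S\<close>] psubset.hyps(1)
      by (simp add: A_def g_def)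
    have card_S: "card S = card A + card (S - A)"
      using card_Diff_subset[OF finite_subset[OF \<open>A \<subseteq> S\<close> psubset.hyps(1)] \<open>A \<subseteq> S\<close>]
        card_mono[OF psubset.hyps(1) \<open>A \<subseteq> S\<close>] by simp
    show ?thesis
      unfolding ev_f ev_g card_orbits card_S by (simp, argo)
  qed
qed

lemma card_eq_sum_card_orbits:
  assumes "f permutes S" "finite S"
  shows "card S = (\<Sum>c\<in>orbit f ` S. card c)"
proof -
  have perm: "permutation f"
    using assms permutation_permutes by blast
  have "\<Union>(orbit f ` S) = S"
    using permutes_orbit_subset[OF assms(1)] permutation_self_in_orbit[OF perm] by blast
  moreover have "orbit f x = orbit f y" if "z \<in> orbit f x" "z \<in> orbit f y" for x y z
    using orbit_cyclic_eq3[OF cyclic_on_orbit'[OF perm]] that by metis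
  then have "pairwise disjnt (orbit f ` S)"
    unfolding pairwise_def disjnt_def by blast
  moreover have "finite c" if "c \<in> orbit f ` S" for c
    using that permutes_orbit_subset[OF assms(1)] assms(2) finite_subset by blast
  ultimately show ?thesis
    using card_Union_disjoint[of "orbit f ` S"] by simp
qed

lemma evenperm_if_odd_card_orbits:
  assumes "f permutes S" "finite S" "\<forall>x\<in>S. odd (card (orbit f x))"
  shows "evenperm f"
proof -
  have "card S + card (orbit f ` S) = (\<Sum>c\<in>orbit f ` S. Suc (card c))"
    using card_eq_sum_card_orbits[OF assms(1,2)] by (simp add: sum_Suc)
  also have "even \<dots>"
    using assms(3) by (auto intro!: dvd_sum)
  finally show ?thesis
    using evenperm_iff_even_card_plus_card_orbits[OF assms(1,2)] by simp
qed

lemma orbit_eq_orb_if_moves_along: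
  assumes "g permutes S" "finite S" "\<forall>x\<in>S. g x = x \<or> g x = t x"
    and "y \<in> S" "g y \<noteq> y"
  shows "orbit g y = orb t y"
proof -
  have perm: "permutation g"
    using assms(1,2) permutation_permutes by blast
  have funpow_eq: "(g ^^ k) y = (t ^^ k) y" for k
  proof (induction k)
    case (Suc k)
    define z where "z = (g ^^ k) y"
    have "z \<in> S"
      unfolding z_def using assms(1,4) by (metis permutes_funpow permutes_in_image)
    have "inj (g ^^ k)"
      using permutes_funpow[OF assms(1)] permutes_inj by blast
    then have "g z \<noteq> z"
      using assms(5) unfolding z_def by (metis funpow_swap1 injD)
    then have "g z = t z"
      using assms(3) \<open>z \<in> S\<close> by blast
    then show ?case
      using Suc.IH by (simp add: z_def)
  qed simp
  show ?thesis
    unfolding orbit_altdef_permutation[OF perm] orb_def funpow_eq ..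
qed

lemma evenperm_if_moves_along_odd_orbits:
  assumes "g permutes S" "finite S" "\<forall>x\<in>S. g x = x \<or> g x = t x"
    and "\<forall>x\<in>S. odd (card (orb t x))"
  shows "evenperm g"
proof (rule evenperm_if_odd_card_orbits[OF assms(1,2)], intro ballI)
  fix y assume "y \<in> S"
  show "odd (card (orbit g y))"
  proof (cases "g y = y")
    case True
    then show ?thesis by (simp add: orbit_eq_singleton_iff[THEN iffD2])
  next
    case False
    then show ?thesis
      using orbit_eq_orb_if_moves_along[OF assms(1-3) \<open>y \<in> S\<close>] assms(4) \<open>y \<in> S\<close> by simp
  qed
qed

lemma evenperm_eq_if_moves_along_odd_orbits:
  assumes "f permutes S" "c permutes S" "finite S"
    and "\<forall>x\<in>S. f (c x) = x \<or> f (c x) = t x" "\<forall>x\<in>S. odd (card (orb t x))"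
  shows "evenperm f \<longleftrightarrow> evenperm c"
proof -
  have "f \<circ> c permutes S"
    using assms(2,1) by (rule permutes_compose)
  then have "evenperm (f \<circ> c)"
    using assms(3-5) by (intro evenperm_if_moves_along_odd_orbits) auto
  moreover have "permutation f" "permutation c"
    using assms(1-3) permutation_permutes by blast+
  ultimately show ?thesis
    by (simp add: evenperm_comp)
qed

theorem odd_card_orbits_if_moves_along_cycle:
  assumes "f permutes S" "c permutes S" "finite S" "cyclic_on c S"
    and "\<forall>x\<in>S. f (c x) = x \<or> f (c x) = t x" "\<forall>x\<in>S. odd (card (orb t x))"
  shows "odd (card (orbit f ` S))"
proof -
  obtain s where "s \<in> S"
    using assms(4) by (auto simp: cyclic_on_def)
  then have "orbit c ` S = {S}"
    using orbit_cyclic_eq3[OF assms(4)] by blast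
  then have "evenperm c \<longleftrightarrow> odd (card S)"
    using evenperm_iff_even_card_plus_card_orbits[OF assms(2,3)] by simp
  then show ?thesis
    using evenperm_eq_if_moves_along_odd_orbits[OF assms(1-3,5,6)]
      evenperm_iff_even_card_plus_card_orbits[OF assms(1,3)] by (cases "even (card S)") auto
qed

lemma cycle_of_list_nth:
  assumes "distinct cs" "i < length cs"
  shows "cycle_of_list cs (cs ! i) = cs ! (Suc i mod length cs)"
proof -
  have "map (cycle_of_list cs) cs = rotate1 cs"
    using cyclic_rotation[OF assms(1), of 1] by simp
  then have "cycle_of_list cs (cs ! i) = rotate1 cs ! i"
    using assms(2) by (metis nth_map)
  then show ?thesis
    using nth_rotate1[OF assms(2)] by simp
qed

lemma cyclic_on_cycle_of_list:
  assumes "distinct cs" "cs \<noteq> []"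
  shows "cyclic_on (cycle_of_list cs) (set cs)"
proof -
  have "(cycle_of_list cs ^^ n) (cs ! 0) = cs ! (n mod length cs)" for n
  proof -
    have "(cycle_of_list cs ^^ n) (cs ! 0) = map (cycle_of_list cs ^^ n) cs ! 0"
      using assms(2) by simp
    also have "\<dots> = cs ! (n mod length cs)"
      using cyclic_rotation[OF assms(1), of n] nth_rotate[of 0 cs n] assms(2) by simp
    finally show ?thesis .
  qed
  moreover have "{cs ! (n mod length cs) | n. True} = set cs"
  proof
    show "{cs ! (n mod length cs) | n. True} \<subseteq> set cs"
      using assms(2) by auto
    show "set cs \<subseteq> {cs ! (n mod length cs) | n. True}"
    proof
      fix x assume "x \<in> set cs"
      then obtain j where "j < length cs" "x = cs ! j"
        by (auto simp: in_set_conv_nth)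
      then show "x \<in> {cs ! (n mod length cs) | n. True}"
        by (intro CollectI exI[of _ j]) simp
    qed
  qed
  ultimately have "orbit (cycle_of_list cs) (cs ! 0) = set cs"
    unfolding orbit_altdef_permutation[OF permutation_of_cycle] by simp
  then show ?thesis
    using assms(2) unfolding cyclic_on_def by force
qed

lemma funpow_comp_self: "(f \<circ> f) ^^ k = f ^^ (2 * k)"
  using funpow_mult[where f = f and m = 2 and n = k] by (simp add: numeral_2_eq_2)

lemma orb_eq_orbit_perm_restrict:
  assumes "perm_restrict f S permutes S" "finite S" "x \<in> S"
  shows "orb f x = orbit (perm_restrict f S) x"
proof -
  have perm: "permutation (perm_restrict f S)"
    using assms(1,2) permutation_permutes by blast
  have "f z \<in> S" if "z \<in> S" for z
    using permutes_in_image[OF assms(1)] that by (metis perm_restrict_simps(1))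
  then have "((perm_restrict f S) ^^ n) x = (f ^^ n) x \<and> (f ^^ n) x \<in> S" for n
    using assms(3) by (induction n) (auto simp: perm_restrict_simps)
  then show ?thesis
    unfolding orb_def orbit_altdef_permutation[OF perm] by metis
qed

lemma perm_restrict_permutes_if_invariant:
  assumes "f permutes S" "finite S" "T \<subseteq> S" "f ` T \<subseteq> T"
  shows "perm_restrict f T permutes T"
proof (rule bij_imp_permutes)
  have "inj_on f T"
    using permutes_inj[OF assms(1)] inj_on_subset by blast
  then have "bij_betw f T T"
    using assms(2-4) endo_inj_surj finite_subset unfolding bij_betw_def by metis
  then show "bij_betw (perm_restrict f T) T T"
    by (rule bij_betw_cong[THEN iffD1, rotated]) (simp add: perm_restrict_simps)
qed (simp add: perm_restrict_simps)

section \<open>Checkerboard-coloured maps\<close>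

locale checkerboard_map =
  fixes D :: "'a set" and \<alpha> \<sigma> :: "'a \<Rightarrow> 'a" and red :: "'a set \<Rightarrow> bool"
  assumes finite_darts: "finite D"
    and alpha_in: "d \<in> D \<Longrightarrow> \<alpha> d \<in> D"
    and alpha_alpha: "d \<in> D \<Longrightarrow> \<alpha> (\<alpha> d) = d"
    and sigma_bij: "bij_betw \<sigma> D D"
    and checkerboard: "checkerboard D \<alpha> \<sigma> red"
begin

definition red_dart :: "'a \<Rightarrow> bool" where
  "red_dart d \<longleftrightarrow> red (face_of \<alpha> \<sigma> d)"

definition red_darts :: "'a set" where
  "red_darts = {d \<in> D. red_dart d}"

abbreviation face_perm :: "'a \<Rightarrow> 'a" where
  "face_perm \<equiv> perm_restrict (\<sigma> \<circ> \<alpha>) D"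

abbreviation red_face_perm :: "'a \<Rightarrow> 'a" where
  "red_face_perm \<equiv> perm_restrict (\<sigma> \<circ> \<alpha>) red_darts"

lemma funpow_sigma_in: "d \<in> D \<Longrightarrow> (\<sigma> ^^ n) d \<in> D"
  using bij_betw_funpow[OF sigma_bij] bij_betwE by blast

lemma sigma_in: "d \<in> D \<Longrightarrow> \<sigma> d \<in> D"
  using funpow_sigma_in[of d 1] by simp

lemma face_perm_permutes: "face_perm permutes D"
proof (rule bij_imp_permutes)
  have "bij_betw \<alpha> D D"
    by (rule bij_betw_byWitness[of D \<alpha> \<alpha>]) (auto simp: alpha_in alpha_alpha)
  then have "bij_betw (\<sigma> \<circ> \<alpha>) D D"
    using sigma_bij by (rule bij_betw_trans)
  then show "bij_betw face_perm D D"
    by (rule bij_betw_cong[THEN iffD1, rotated]) (simp add: perm_restrict_simps)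
qed (simp add: perm_restrict_simps)

lemma face_of_eq_orbit: "d \<in> D \<Longrightarrow> face_of \<alpha> \<sigma> d = orbit face_perm d"
  unfolding face_of_def by (rule orb_eq_orbit_perm_restrict[OF face_perm_permutes finite_darts])

lemma red_dart_alpha: "d \<in> D \<Longrightarrow> red_dart (\<alpha> d) \<longleftrightarrow> \<not> red_dart d"
  using checkerboard unfolding checkerboard_def red_dart_def by blast

lemma red_dart_sigma:
  assumes "d \<in> D"
  shows "red_dart (\<sigma> d) \<longleftrightarrow> \<not> red_dart d"
proof -
  have "permutation face_perm"
    using face_perm_permutes finite_darts permutation_permutes by blast
  have "\<sigma> d = face_perm (\<alpha> d)"
    using assms by (simp add: perm_restrict_simps alpha_in alpha_alpha)
  then have "face_of \<alpha> \<sigma> (\<sigma> d) = orbit face_perm (face_perm (\<alpha> d))"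
    using face_of_eq_orbit[OF sigma_in[OF assms]] by simp
  also have "\<dots> = face_of \<alpha> \<sigma> (\<alpha> d)"
    using permutation_orbit_step[OF \<open>permutation face_perm\<close>] face_of_eq_orbit[OF alpha_in[OF assms]]
    by simp
  finally show ?thesis
    using red_dart_alpha[OF assms] by (simp add: red_dart_def)
qed

lemma red_dart_funpow_sigma:
  "d \<in> D \<Longrightarrow> red_dart ((\<sigma> ^^ n) d) \<longleftrightarrow> (red_dart d \<longleftrightarrow> even n)"
  by (induction n) (simp_all add: red_dart_sigma funpow_sigma_in)

lemma orb_sigma_sigma:
  assumes "d \<in> D"
  shows "orb (\<sigma> \<circ> \<sigma>) d = {e \<in> vertex_of \<sigma> d. red_dart e \<longleftrightarrow> red_dart d}"
proof
  show "orb (\<sigma> \<circ> \<sigma>) d \<subseteq> {e \<in> vertex_of \<sigma> d. red_dart e \<longleftrightarrow> red_dart d}"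
  proof
    fix e assume "e \<in> orb (\<sigma> \<circ> \<sigma>) d"
    then obtain k where "e = (\<sigma> ^^ (2 * k)) d"
      by (auto simp: orb_def funpow_comp_self)
    then show "e \<in> {e \<in> vertex_of \<sigma> d. red_dart e \<longleftrightarrow> red_dart d}"
      using red_dart_funpow_sigma[OF assms, of "2 * k"] by (auto simp: vertex_of_def orb_def)
  qed
  show "{e \<in> vertex_of \<sigma> d. red_dart e \<longleftrightarrow> red_dart d} \<subseteq> orb (\<sigma> \<circ> \<sigma>) d"
  proof clarify
    fix e assume "e \<in> vertex_of \<sigma> d" "red_dart e \<longleftrightarrow> red_dart d"
    then obtain n where "e = (\<sigma> ^^ n) d" "even n"
      using red_dart_funpow_sigma[OF assms] by (auto simp: vertex_of_def orb_def)
    then show "e \<in> orb (\<sigma> \<circ> \<sigma>) d"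
      unfolding orb_def funpow_comp_self by (auto elim!: evenE)
  qed
qed

lemma red_incidences_eq_card_orb:
  assumes "d \<in> D" "red_dart d"
  shows "red_incidences \<alpha> \<sigma> red (vertex_of \<sigma> d) = card (orb (\<sigma> \<circ> \<sigma>) d)"
  using assms unfolding red_incidences_def orb_sigma_sigma[OF assms(1)] by (simp add: red_dart_def)

lemma finite_red_darts: "finite red_darts"
  using finite_darts by (simp add: red_darts_def)

lemma red_face_perm_permutes: "red_face_perm permutes red_darts"
proof -
  have "face_perm ` red_darts \<subseteq> red_darts"
    by (auto simp: red_darts_def perm_restrict_simps red_dart_sigma red_dart_alpha
        alpha_in sigma_in)
  then have "perm_restrict face_perm red_darts permutes red_darts"
    using face_perm_permutes finite_darts by (rule perm_restrict_permutes_if_invariant[rotated 3])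
      (auto simp: red_darts_def)
  moreover have "D \<inter> red_darts = red_darts"
    by (auto simp: red_darts_def)
  ultimately show ?thesis
    by (simp add: perm_restrict_perm_restrict)
qed

lemma red_faces_eq_orbits: "{F \<in> faces D \<alpha> \<sigma>. red F} = orbit red_face_perm ` red_darts"
proof -
  have "orbit red_face_perm d = face_of \<alpha> \<sigma> d" if "d \<in> red_darts" for d
    unfolding face_of_def
    by (rule orb_eq_orbit_perm_restrict[OF red_face_perm_permutes finite_red_darts that, symmetric])
  then show ?thesis
    by (auto simp: faces_def red_darts_def red_dart_def)
qed

subsection \<open>A-trails\<close>

lemma A_trail_in_darts: "A_trail D \<alpha> \<sigma> ts \<Longrightarrow> set ts \<subseteq> D"
  by (simp add: A_trail_def eulerian_circuit_def)

lemma A_trail_distinct: "A_trail D \<alpha> \<sigma> ts \<Longrightarrow> distinct ts"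
  by (simp add: A_trail_def eulerian_circuit_def distinct_map)

lemma A_trail_transition:
  assumes "A_trail D \<alpha> \<sigma> ts" "i < length ts"
  shows "\<sigma> (\<alpha> (ts ! i)) = ts ! (Suc i mod length ts) \<or> \<sigma> (ts ! (Suc i mod length ts)) = \<alpha> (ts ! i)"
  using assms by (simp add: A_trail_def smooth_pair_def)

lemma A_trail_covers_darts:
  assumes "A_trail D \<alpha> \<sigma> ts" "d \<in> D"
  shows "d \<in> set ts \<or> \<alpha> d \<in> set ts"
proof -
  have "edge_of \<alpha> d \<in> edge_of \<alpha> ` set ts"
    using assms by (simp add: A_trail_def eulerian_circuit_def edges_def)
  then obtain t where "t \<in> set ts" "{d, \<alpha> d} = {t, \<alpha> t}"
    by (auto simp: edge_of_def)
  then show ?thesis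
    using alpha_alpha assms(2) by (metis doubleton_eq_iff)
qed

lemma A_trail_red_dart_eq:
  assumes "A_trail D \<alpha> \<sigma> ts" "i < length ts"
  shows "red_dart (ts ! i) \<longleftrightarrow> red_dart (ts ! 0)"
  using assms(2)
proof (induction i)
  case (Suc i)
  have "ts ! i \<in> D" "ts ! Suc i \<in> D"
    using A_trail_in_darts[OF assms(1)] Suc.prems by auto
  moreover have "Suc i mod length ts = Suc i"
    using Suc.prems by simp
  ultimately have "red_dart (ts ! Suc i) \<longleftrightarrow> red_dart (ts ! i)"
    using A_trail_transition[OF assms(1), of i] Suc.prems
    by (metis Suc_lessD red_dart_alpha red_dart_sigma alpha_in)
  then show ?case
    using Suc by simp
qed simp

lemma A_trail_red_darts_red:
  assumes "A_trail D \<alpha> \<sigma> ts" "red_dart (ts ! 0)"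
  shows "red_darts = set ts"
proof -
  have red: "red_dart t" if "t \<in> set ts" for t
    using that A_trail_red_dart_eq[OF assms(1)] assms(2) by (metis in_set_conv_nth)
  show ?thesis
  proof
    show "set ts \<subseteq> red_darts"
      using red A_trail_in_darts[OF assms(1)] by (auto simp: red_darts_def)
    show "red_darts \<subseteq> set ts"
      using A_trail_covers_darts[OF assms(1)] red red_dart_alpha by (auto simp: red_darts_def)
  qed
qed

lemma A_trail_red_darts_blue:
  assumes "A_trail D \<alpha> \<sigma> ts" "\<not> red_dart (ts ! 0)"
  shows "red_darts = \<alpha> ` set ts"
proof -
  have blue: "\<not> red_dart t" if "t \<in> set ts" for t
    using that A_trail_red_dart_eq[OF assms(1)] assms(2) by (metis in_set_conv_nth)
  show ?thesis
  proof
    show "\<alpha> ` set ts \<subseteq> red_darts"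
      using blue A_trail_in_darts[OF assms(1)] red_dart_alpha alpha_in by (auto simp: red_darts_def)
    show "red_darts \<subseteq> \<alpha> ` set ts"
    proof
      fix d assume "d \<in> red_darts"
      then have "d \<in> D" "red_dart d"
        by (auto simp: red_darts_def)
      then have "\<alpha> d \<in> set ts"
        using A_trail_covers_darts[OF assms(1)] blue by blast
      then show "d \<in> \<alpha> ` set ts"
        using alpha_alpha[OF \<open>d \<in> D\<close>] by (metis image_eqI)
    qed
  qed
qed

lemma A_trail_cyclic_order_red:
  assumes "A_trail D \<alpha> \<sigma> ts" "red_dart (ts ! 0)"
  obtains c where "c permutes red_darts" "cyclic_on c red_darts"
    "\<forall>x\<in>red_darts. red_face_perm (c x) = x \<or> red_face_perm (c x) = \<sigma> (\<sigma> x)"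
proof -
  define b where "b = cycle_of_list ts"
  have darts: "red_darts = set ts"
    using A_trail_red_darts_red[OF assms] .
  have "distinct ts" "ts \<noteq> []"
    using assms(1) A_trail_distinct by (auto simp: A_trail_def eulerian_circuit_def)
  have b: "b permutes set ts"
    unfolding b_def by (rule cycle_permutes)
  show thesis
  proof (rule that[of "inv b"])
    show "inv b permutes red_darts"
      unfolding darts using b by (rule permutes_inv)
    show "cyclic_on (inv b) red_darts"
      using cyclic_on_cycle_of_list[OF \<open>distinct ts\<close> \<open>ts \<noteq> []\<close>]
      unfolding darts b_def cyclic_on_def orbit_inv_eq[OF permutation_of_cycle] .
    show "\<forall>x\<in>red_darts. red_face_perm (inv b x) = x \<or> red_face_perm (inv b x) = \<sigma> (\<sigma> x)"
    proof
      fix x assume "x \<in> red_darts"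
      then have "inv b x \<in> set ts" "b (inv b x) = x"
        using permutes_in_image[OF permutes_inv[OF b]] permutes_inverses(1)[OF b] darts by auto
      then obtain i where i: "i < length ts" "inv b x = ts ! i" "x = ts ! (Suc i mod length ts)"
        using cycle_of_list_nth[OF \<open>distinct ts\<close>] unfolding b_def by (metis in_set_conv_nth)
      have "red_face_perm (inv b x) = \<sigma> (\<alpha> (ts ! i))"
        using \<open>inv b x \<in> set ts\<close> i(2) darts by (simp add: perm_restrict_simps)
      then show "red_face_perm (inv b x) = x \<or> red_face_perm (inv b x) = \<sigma> (\<sigma> x)"
        using A_trail_transition[OF assms(1) i(1)] i(3) by auto
    qed
  qed
qed

lemma A_trail_cyclic_order_blue:
  assumes "A_trail D \<alpha> \<sigma> ts" "\<not> red_dart (ts ! 0)"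
  obtains c where "c permutes red_darts" "cyclic_on c red_darts"
    "\<forall>x\<in>red_darts. red_face_perm (c x) = x \<or> red_face_perm (c x) = \<sigma> (\<sigma> x)"
proof -
  define rs where "rs = map \<alpha> ts"
  have darts: "red_darts = set rs"
    using A_trail_red_darts_blue[OF assms] by (simp add: rs_def)
  have "inj_on \<alpha> (set ts)"
    using A_trail_in_darts[OF assms(1)] alpha_alpha by (metis inj_on_inverseI subsetD)
  then have "distinct rs" "rs \<noteq> []"
    using assms(1) A_trail_distinct
    by (auto simp: rs_def distinct_map A_trail_def eulerian_circuit_def)
  show thesis
  proof (rule that[of "cycle_of_list rs"])
    show "cycle_of_list rs permutes red_darts"
      unfolding darts by (rule cycle_permutes)
    show "cyclic_on (cycle_of_list rs) red_darts"
      unfolding darts using \<open>distinct rs\<close> \<open>rs \<noteq> []\<close> by (rule cyclic_on_cycle_of_list)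
    show "\<forall>x\<in>red_darts. red_face_perm (cycle_of_list rs x) = x \<or>
        red_face_perm (cycle_of_list rs x) = \<sigma> (\<sigma> x)"
    proof
      fix x assume "x \<in> red_darts"
      then obtain i where i: "i < length ts" "x = \<alpha> (ts ! i)"
        unfolding darts rs_def by (auto simp: in_set_conv_nth)
      define j where "j = Suc i mod length ts"
      have "j < length ts"
        unfolding j_def using i(1) by (intro mod_less_divisor) linarith
      then have "ts ! j \<in> D"
        using A_trail_in_darts[OF assms(1)] nth_mem by blast
      have "cycle_of_list rs x = \<alpha> (ts ! j)"
        using cycle_of_list_nth[OF \<open>distinct rs\<close>, of i] i \<open>j < length ts\<close>
        by (simp add: rs_def j_def)
      moreover have "\<alpha> (ts ! j) \<in> red_darts"
        using \<open>j < length ts\<close> darts by (simp add: rs_def)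
      ultimately have "red_face_perm (cycle_of_list rs x) = \<sigma> (ts ! j)"
        using alpha_alpha[OF \<open>ts ! j \<in> D\<close>] by (simp add: perm_restrict_simps)
      then show "red_face_perm (cycle_of_list rs x) = x \<or>
          red_face_perm (cycle_of_list rs x) = \<sigma> (\<sigma> x)"
        using A_trail_transition[OF assms(1) i(1)] i(2) by (auto simp: j_def)
    qed
  qed
qed

theorem odd_card_red_faces_if_A_trail:
  assumes "A_trail D \<alpha> \<sigma> ts" "\<forall>v\<in>vertices D \<sigma>. odd (red_incidences \<alpha> \<sigma> red v)"
  shows "odd (card {F \<in> faces D \<alpha> \<sigma>. red F})"
proof -
  obtain c where "c permutes red_darts" "cyclic_on c red_darts"
    "\<forall>x\<in>red_darts. red_face_perm (c x) = x \<or> red_face_perm (c x) = \<sigma> (\<sigma> x)"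
    using A_trail_cyclic_order_red[OF assms(1)] A_trail_cyclic_order_blue[OF assms(1)] by blast
  moreover have "\<forall>x\<in>red_darts. odd (card (orb (\<sigma> \<circ> \<sigma>) x))"
    using assms(2) red_incidences_eq_card_orb by (auto simp: red_darts_def vertices_def)
  ultimately have "odd (card (orbit red_face_perm ` red_darts))"
    using odd_card_orbits_if_moves_along_cycle[OF red_face_perm_permutes _ finite_red_darts,
        of c "\<sigma> \<circ> \<sigma>"]
    by simp
  then show ?thesis
    unfolding red_faces_eq_orbits .
qed

end

theorem mainTheorem5:
  fixes D :: "'a set" and \<alpha> \<sigma> :: "'a \<Rightarrow> 'a" and red :: "'a set \<Rightarrow> bool"
  assumes "torus_map D \<alpha> \<sigma>"
    and "checkerboard D \<alpha> \<sigma> red"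
    and "\<forall>v \<in> vertices D \<sigma>. odd (red_incidences \<alpha> \<sigma> red v) \<and> odd (blue_incidences \<alpha> \<sigma> red v)"
    and "\<exists>ts. A_trail D \<alpha> \<sigma> ts"
  shows "odd (card {F \<in> faces D \<alpha> \<sigma>. red F}) \<or> odd (card {F \<in> faces D \<alpha> \<sigma>. \<not> red F})"
proof -
  interpret checkerboard_map D \<alpha> \<sigma> red
    using assms(1,2) by unfold_locales (auto simp: torus_map_def rotation_system_def)
  obtain ts where "A_trail D \<alpha> \<sigma> ts"
    using assms(4) ..
  then have "odd (card {F \<in> faces D \<alpha> \<sigma>. red F})"
    using assms(3) odd_card_red_faces_if_A_trail by blast
  then show ?thesis ..
qed

end
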